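(* Consider a market with $n$ goods, supplies $w_i>0$ and demands $x_i:(0,\infty)^n\to(0,\infty)$ satisfying: (fixed spending) $\sum_ip_ix_i(p)=M$ for all $p$ (constant $M>0$); (WGS) for $j\ne i$, $x_j(p)$ is non-decreasing in $p_i$; (elasticity $E$) each $x_i$ is differentiable in $p_i$ and $\frac{x_i(p)}{p_i}\le-\frac{\partial x_i}{\partial p_i}(p)\le E\frac{x_i(p)}{p_i}$ for all $p$, where $E\ge1$. Let $0<\lambda\le\frac12$ with $\lambda(2E-1)\le\frac12$. Given $p$, define the simultaneous update $p'$ by $p_i'=p_i\big(1+\lambda\min\{1,\frac{x_i(p)-w_i}{w_i}\}\big)$ for all $i$, and let $\phi(q)=\sum_iq_i|x_i(q)-w_i|$. Then \[ \phi(p)-\phi(p')\ \ge\ \sum_i\lambda\, p_i|x_i(p)-w_i|\min\Big\{1,\frac{w_i}{|x_i(p)-w_i|}\Big\} \] (terms with $x_i(p)=w_i$ being $0$). In particular, if $x_i(p)\le d\,w_i$ for all $i$ with $d\ge 2$, then $\phi(p')\le\big(1-\frac{\lambda}{d-1}\big)\phi(p)$. *)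

theory Defs
  imports Complex_Main
begin

definition pos_prices :: "('n \<Rightarrow> real) \<Rightarrow> bool" where
  "pos_prices p \<longleftrightarrow> (\<forall>i. p i > 0)"

definition phi :: "('n::finite \<Rightarrow> ('n \<Rightarrow> real) \<Rightarrow> real) \<Rightarrow> ('n \<Rightarrow> real) \<Rightarrow> ('n \<Rightarrow> real) \<Rightarrow> real" where
  "phi x w q = (\<Sum>i\<in>UNIV. q i * \<bar>x i q - w i\<bar>)"

definition update :: "real \<Rightarrow> ('n \<Rightarrow> ('n \<Rightarrow> real) \<Rightarrow> real) \<Rightarrow> ('n \<Rightarrow> real) \<Rightarrow> ('n \<Rightarrow> real) \<Rightarrow> ('n \<Rightarrow> real)" where
  "update lam x w p = (\<lambda>i. p i * (1 + lam * min 1 ((x i p - w i) / w i)))"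

end

theory Submission
  imports Defs
begin

(* Write s_i = p_i x_i(p) and s'_i = p'_i x_i(p') for spending before and after the update, and
   a_i = p'_i w_i for the spending that exactly clears good i at the new prices p', so that
   phi(p') = sum_i |s'_i - a_i|.  The update multiplies p_i by rho_i = 1 + lam min{1, (x_i - w_i)/w_i},
   and the new target rho_i w_i lies between w_i and x_i(p); hence p_i |x_i - w_i| - |s_i - a_i| is
   exactly the claimed per-good gain, and it suffices to show sum_i |s'_i - a_i| <= sum_i |s_i - a_i|.
   As total spending is fixed, only the total shortfall sum_i max 0 (a_i - s'_i) must be controlled.
   This is done through the intermediate prices r = min p p' (componentwise): for a good in deficit
   (price lowered) the elasticity bound keeps demand at r below supply, and for a good in surplus
   (price raised) it limits how much demand can fall.  Both rest on the monotonicity of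
   x_i(p) p_i^E in the own price p_i, together with WGS to compare demands at r, p and p'. *)

lemma exp_growth_bound:
  fixes u lam E :: real
  assumes u: "0 \<le> u" "u \<le> 1" and lam: "0 \<le> lam" "lam * E \<le> 1/2" and E: "0 \<le> E"
  shows "(1 + lam * u) powr E \<le> 1 + u"
proof -
  have "1 + lam * u > 0" using u lam by (simp add: add_pos_nonneg)
  then have "(1 + lam * u) powr E = exp (E * ln (1 + lam * u))" by (simp add: powr_def)
  also have "\<dots> \<le> exp (E * (lam * u))"
    using ln_add_one_self_le_self[of "lam * u"] u lam E by (intro exp_mono mult_left_mono) auto
  also have "\<dots> \<le> exp (u / 2)"
    using mult_right_mono[OF lam(2) u(1)] by (simp add: mult.assoc mult.left_commute)
  also have "\<dots> \<le> 1 / (1 - u / 2)"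
  proof -
    have "(1 - u/2) * exp (u/2) \<le> exp (-(u/2)) * exp (u/2)"
      using exp_ge_add_one_self[of "-(u/2)"] by (intro mult_right_mono) auto
    then show ?thesis using u by (simp add: field_simps flip: exp_add)
  qed
  also have "\<dots> \<le> 1 + u"
    using u mult_left_le[of u u] by (simp add: field_simps)
  finally show ?thesis .
qed

lemma exp_decay_bound:
  fixes v lam E :: real
  assumes v: "0 \<le> v" "v \<le> 1" and lam: "0 \<le> lam" "lam \<le> 1/2" "lam * E \<le> 1/2" and E: "0 \<le> E"
  shows "1 - v \<le> (1 - lam * v) powr E"
proof -
  define y where "y = lam * v"
  have y: "0 \<le> y" "y \<le> 1/2"
    using v lam mult_left_le[of v lam] unfolding y_def by auto
  have "- ln (1 - y) = ln (1 + y / (1 - y))"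
    using y by (simp add: field_simps ln_div)
  also have "\<dots> \<le> y / (1 - y)"
    using y by (intro ln_add_one_self_le_self) simp
  finally have "E * (- ln (1 - y)) \<le> E * (y / (1 - y))"
    using E by (intro mult_left_mono)
  moreover have "E * (y / (1 - y)) \<le> v"
  proof -
    have "E * lam * v \<le> (1 - y) * v"
      using v lam y by (intro mult_right_mono) (auto simp: mult.commute)
    then show ?thesis using y unfolding y_def by (simp add: field_simps)
  qed
  ultimately have "1 - v \<le> 1 + E * ln (1 - y)" by linarith
  also have "\<dots> \<le> exp (E * ln (1 - y))" by (rule exp_ge_add_one_self)
  also have "\<dots> = (1 - y) powr E" using y by (simp add: powr_def)
  finally show ?thesis unfolding y_def .
qed

definition weak_gross_substitutes :: "('n \<Rightarrow> ('n \<Rightarrow> real) \<Rightarrow> real) \<Rightarrow> bool" where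
  "weak_gross_substitutes x \<longleftrightarrow>
     (\<forall>q i j s t. pos_prices q \<and> j \<noteq> i \<and> 0 < s \<and> s \<le> t \<longrightarrow> x j (q(i := s)) \<le> x j (q(i := t)))"

(* Own-price elasticity of demand at most E: the only half of the elasticity hypothesis
   that the argument needs. *)
definition elasticity_at_most :: "real \<Rightarrow> ('n \<Rightarrow> ('n \<Rightarrow> real) \<Rightarrow> real) \<Rightarrow> bool" where
  "elasticity_at_most E x \<longleftrightarrow>
     (\<forall>q i. pos_prices q \<longrightarrow> (\<exists>D. ((\<lambda>t. x i (q(i := t))) has_real_derivative D) (at (q i))
                                  \<and> - D \<le> E * (x i q / q i)))"

(* If -f'(t) <= E f(t)/t for t > 0, then f(t) t^E is nondecreasing on (0, oo):
   its derivative is t^E (f'(t) + E f(t)/t) >= 0. *)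
lemma elasticity_bound_mono:
  fixes f :: "real \<Rightarrow> real"
  assumes deriv: "\<And>t. t > 0 \<Longrightarrow> \<exists>D. (f has_real_derivative D) (at t) \<and> - D \<le> E * (f t / t)"
    and ab: "0 < a" "a \<le> b"
  shows "f a * a powr E \<le> f b * b powr E"
proof (rule DERIV_nonneg_imp_nondecreasing[OF ab(2)])
  fix t assume "a \<le> t" "t \<le> b"
  then have t: "t > 0" using ab by simp
  obtain D where D: "(f has_real_derivative D) (at t)" "- D \<le> E * (f t / t)"
    using deriv[OF t] by blast
  have "((\<lambda>t. f t * t powr E) has_real_derivative D * t powr E + f t * (E * t powr (E - 1))) (at t)"
    using D(1) t by (auto intro!: derivative_eq_intros)
  moreover have "D * t powr E + f t * (E * t powr (E - 1)) = t powr E * (D + E * (f t / t))"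
    using t by (simp add: powr_diff field_simps)
  moreover have "t powr E * (D + E * (f t / t)) \<ge> 0" using D(2) by simp
  ultimately show "\<exists>y. ((\<lambda>t. f t * t powr E) has_real_derivative y) (at t) \<and> 0 \<le> y" by metis
qed

lemma own_price_effect:
  assumes "elasticity_at_most E x" and "pos_prices q" and "0 < a" "a \<le> b"
  shows "x i (q(i := a)) * a powr E \<le> x i (q(i := b)) * b powr E"
proof (rule elasticity_bound_mono[where f = "\<lambda>t. x i (q(i := t))", OF _ assms(3,4)])
  fix t :: real assume "t > 0"
  then have "pos_prices (q(i := t))" using assms(2) by (auto simp: pos_prices_def)
  then obtain D where "((\<lambda>s. x i ((q(i := t))(i := s))) has_real_derivative D) (at ((q(i := t)) i))"
      "- D \<le> E * (x i (q(i := t)) / (q(i := t)) i)"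
    using assms(1) unfolding elasticity_at_most_def by blast
  then show "\<exists>D. ((\<lambda>t. x i (q(i := t))) has_real_derivative D) (at t) \<and> - D \<le> E * (x i (q(i := t)) / t)"
    by auto
qed

lemma cross_price_effect_on:
  assumes wgs: "weak_gross_substitutes x" and "finite S" and "pos_prices q"
    and "\<forall>k. q k \<le> q' k" and "\<forall>k. k \<notin> S \<longrightarrow> q k = q' k" and "i \<notin> S"
  shows "x i q \<le> x i q'"
  using assms(2-)
proof (induction S arbitrary: q' rule: finite_induct)
  case empty
  then have "q = q'" by auto
  then show ?case by simp
next
  case (insert k S)
  define q'' where "q'' = q'(k := q k)"
  have "x i q \<le> x i q''"
    using insert.IH insert.prems unfolding q''_def by auto
  moreover have "pos_prices q''"
    using insert.prems unfolding q''_def pos_prices_def by (auto intro: order_less_le_trans)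
  then have "x i (q''(k := q k)) \<le> x i (q''(k := q' k))"
    using wgs insert.prems unfolding weak_gross_substitutes_def pos_prices_def by auto
  moreover have "q''(k := q k) = q''" "q''(k := q' k) = q'" unfolding q''_def by auto
  ultimately show ?case by simp
qed

lemma cross_price_effect:
  fixes x :: "'n::finite \<Rightarrow> ('n \<Rightarrow> real) \<Rightarrow> real"
  assumes "weak_gross_substitutes x" and "pos_prices q" and "\<forall>k. q k \<le> q' k" and "q i = q' i"
  shows "x i q \<le> x i q'"
  using cross_price_effect_on[OF assms(1), of "UNIV - {i}"] assms(2-) by auto

definition price_factor :: "real \<Rightarrow> real \<Rightarrow> real \<Rightarrow> real" where
  "price_factor lam d s = 1 + lam * min 1 ((d - s) / s)"

lemma update_eq: "update lam x w p i = p i * price_factor lam (x i p) (w i)"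
  by (simp add: update_def price_factor_def)

context
  fixes lam d s :: real
  assumes s: "0 < s" and d: "0 < d" and lam: "0 \<le> lam" "lam \<le> 1"
begin

lemma price_factor_pos: "0 < price_factor lam d s"
proof -
  define m where "m = min 1 ((d - s) / s)"
  have "-1 < m" using s d unfolding m_def by (simp add: field_simps)
  moreover have "min 0 m \<le> lam * m"
    using lam mult_right_mono_neg[of lam 1 m] by (cases "0 \<le> m") auto
  ultimately show ?thesis unfolding price_factor_def m_def[symmetric] by linarith
qed

lemma price_factor_deficit:
  assumes "d < s" and "lam \<le> 1/2" "lam * E \<le> 1/2" "0 \<le> E"
  shows "price_factor lam d s \<le> 1" and "d \<le> s * price_factor lam d s powr E"
proof -
  define v where "v = (s - d) / s"
  have v: "0 \<le> v" "v \<le> 1" and "d = s * (1 - v)"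
    using assms(1) s d unfolding v_def by (auto simp: field_simps)
  moreover have "price_factor lam d s = 1 - lam * v"
    using assms(1) s unfolding price_factor_def v_def by (auto simp: field_simps min_def)
  ultimately show "price_factor lam d s \<le> 1" and "d \<le> s * price_factor lam d s powr E"
    using lam exp_decay_bound[OF v lam(1) assms(2-4)] s by auto
qed

lemma price_factor_surplus:
  assumes "s \<le> d" and "lam * E \<le> 1/2" "0 \<le> E"
  shows "1 \<le> price_factor lam d s" and "s * price_factor lam d s powr E \<le> d"
proof -
  define u where "u = min 1 ((d - s) / s)"
  have u: "0 \<le> u" "u \<le> 1" using assms(1) s unfolding u_def by auto
  then show "1 \<le> price_factor lam d s" using lam unfolding price_factor_def u_def[symmetric] by simp
  have "price_factor lam d s powr E \<le> 1 + u"
    unfolding price_factor_def u_def[symmetric] using exp_growth_bound[OF u lam(1) assms(2,3)] .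
  also have "\<dots> \<le> d / s" using s unfolding u_def by (simp add: diff_divide_distrib)
  finally show "s * price_factor lam d s powr E \<le> d" using s by (simp add: field_simps)
qed

lemma price_factor_between:
  "min d s \<le> price_factor lam d s * s \<and> price_factor lam d s * s \<le> max d s"
proof (cases "d < s")
  case True
  then have "price_factor lam d s * s = s + lam * (d - s)"
    using s unfolding price_factor_def by (simp add: field_simps min_def)
  moreover have "1 * (d - s) \<le> lam * (d - s)" "lam * (d - s) \<le> 0"
    using True lam by (auto intro: mult_right_mono_neg mult_nonneg_nonpos)
  ultimately show ?thesis using True unfolding min_def max_def by (smt (verit))
next
  case False
  then have "price_factor lam d s * s = s + lam * min s (d - s)"
    using s unfolding price_factor_def by (simp add: field_simps min_def)
  moreover have "0 \<le> min s (d - s)" using False s by simp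
  then have "lam * min s (d - s) \<le> 1 * min s (d - s)" "0 \<le> lam * min s (d - s)"
    using lam by (metis mult_right_mono, simp)
  ultimately show ?thesis using False unfolding min_def max_def by (smt (verit))
qed

lemma price_factor_gain:
  "\<bar>d - s\<bar> - \<bar>d - price_factor lam d s * s\<bar> = lam * \<bar>d - s\<bar> * min 1 (s / \<bar>d - s\<bar>)"
proof -
  have "\<bar>d - s\<bar> - \<bar>d - t\<bar> = \<bar>t - s\<bar>" if "min d s \<le> t \<and> t \<le> max d s" for t
    using that unfolding min_def max_def by (cases "d \<le> s") (simp_all add: abs_if)
  then have "\<bar>d - s\<bar> - \<bar>d - price_factor lam d s * s\<bar> = \<bar>price_factor lam d s * s - s\<bar>"
    using price_factor_between by blast
  also have "\<dots> = lam * \<bar>min s (d - s)\<bar>"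
    using s lam unfolding price_factor_def by (simp add: field_simps abs_mult min_def)
  also have "\<bar>min s (d - s)\<bar> = \<bar>d - s\<bar> * min 1 (s / \<bar>d - s\<bar>)"
    using s d by (cases "d = s") (auto simp: field_simps min_def abs_if)
  finally show ?thesis by simp
qed

end

lemma deficit_good:
  fixes x :: "'n::finite \<Rightarrow> ('n \<Rightarrow> real) \<Rightarrow> real"
  assumes wgs: "weak_gross_substitutes x" and elast: "elasticity_at_most E x"
    and r: "pos_prices r" "\<forall>k. r k \<le> q k" "\<forall>k. r k \<le> q' k" "r i = q' i"
    and \<rho>: "0 < \<rho>" "q' i = q i * \<rho>" and target: "x i q \<le> w * \<rho> powr E"
  shows "x i r \<le> w" and "x i r \<le> x i q'"
proof -
  have q: "pos_prices q" and qi: "0 < q i"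
    using r unfolding pos_prices_def by (auto intro: order_less_le_trans)
  have "q i * \<rho> \<le> q i" using r \<rho> by metis
  then have "x i (q(i := q i * \<rho>)) * (q i * \<rho>) powr E \<le> x i (q(i := q i)) * q i powr E"
    using own_price_effect[OF elast q, of "q i * \<rho>" "q i" i] \<rho> qi by simp
  then have "x i (q(i := q' i)) * \<rho> powr E \<le> x i q"
    using qi \<rho> by (simp add: powr_mult mult.assoc)
  then have "x i (q(i := q' i)) \<le> w"
    using target \<rho>(1) by (smt (verit) mult_right_mono powr_gt_zero mult_le_cancel_right_pos)
  moreover have "x i r \<le> x i (q(i := q' i))"
    using cross_price_effect[OF wgs r(1)] r by simp
  ultimately show "x i r \<le> w" by simp
  show "x i r \<le> x i q'"
    using cross_price_effect[OF wgs r(1)] r by simp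
qed

lemma surplus_good:
  fixes x :: "'n::finite \<Rightarrow> ('n \<Rightarrow> real) \<Rightarrow> real"
  assumes wgs: "weak_gross_substitutes x" and elast: "elasticity_at_most E x" and E: "1 \<le> E"
    and r: "pos_prices r" "\<forall>k. r k \<le> q k" "\<forall>k. r k \<le> q' k" "r i = q i"
    and \<rho>: "1 \<le> \<rho>" "q' i = q i * \<rho>" and target: "w * \<rho> powr E \<le> x i q"
  shows "\<rho> * (w - x i q') \<le> x i q - x i r" and "x i r \<le> x i q"
proof -
  have qi: "0 < q i" using r(1,4) unfolding pos_prices_def by metis
  have "x i r * q i powr E \<le> x i (r(i := q' i)) * q' i powr E"
    using own_price_effect[OF elast r(1), of "q i" "q' i" i] r \<rho> qi by (simp add: fun_upd_idem)
  moreover have "x i (r(i := q' i)) \<le> x i q'"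
    using r qi \<rho> by (intro cross_price_effect[OF wgs]) (auto simp: pos_prices_def)
  ultimately have "x i r * q i powr E \<le> x i q' * \<rho> powr E * q i powr E"
    using \<rho> qi by (smt (verit) mult_right_mono powr_ge_zero powr_mult mult.commute mult.left_commute)
  then have own: "x i r \<le> x i q' * \<rho> powr E" using qi by simp
  show cross: "x i r \<le> x i q"
    using cross_price_effect[OF wgs r(1)] r by simp
  have "\<rho> \<le> \<rho> powr E" using powr_mono[OF E \<rho>(1)] \<rho> by simp
  have "\<rho> powr E * (\<rho> * (w - x i q')) = \<rho> * (w * \<rho> powr E - x i q' * \<rho> powr E)"
    by (simp add: algebra_simps)
  also have "\<dots> \<le> \<rho> * (x i q - x i r)" using target own \<rho> by (intro mult_left_mono) auto
  also have "\<dots> \<le> \<rho> powr E * (x i q - x i r)"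
    using \<open>\<rho> \<le> \<rho> powr E\<close> cross by (intro mult_right_mono) auto
  finally show "\<rho> * (w - x i q') \<le> x i q - x i r" using \<rho> by simp
qed

lemma sum_abs_gap_decrease:
  fixes s s' sr a :: "'i \<Rightarrow> real"
  assumes sums: "sum s' I = sum s I" "sum sr I = sum s I"
    and deficit: "\<And>i. i \<in> I \<Longrightarrow> P i \<Longrightarrow> s i \<le> a i \<and> sr i \<le> a i \<and> sr i \<le> s' i"
    and surplus: "\<And>i. i \<in> I \<Longrightarrow> \<not> P i \<Longrightarrow> a i \<le> s i \<and> sr i \<le> s i \<and> a i - s' i \<le> s i - sr i"
  shows "(\<Sum>i\<in>I. \<bar>s' i - a i\<bar>) \<le> (\<Sum>i\<in>I. \<bar>s i - a i\<bar>)"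
proof -
  (* b i - s i is the old shortfall max 0 (a i - s i), and b i - sr i bounds the new one *)
  define b where "b i = (if P i then a i else s i)" for i
  have abs_split: "\<bar>t - a i\<bar> = (t - a i) + 2 * max 0 (a i - t)" for t i
    by (simp add: abs_if max_def)
  have "(\<Sum>i\<in>I. max 0 (a i - s' i)) \<le> (\<Sum>i\<in>I. b i - sr i)"
    using deficit surplus unfolding b_def by (intro sum_mono) auto
  also have "\<dots> = (\<Sum>i\<in>I. b i - s i)"
    using sums by (simp add: sum_subtractf)
  also have "\<dots> = (\<Sum>i\<in>I. max 0 (a i - s i))"
    using deficit surplus unfolding b_def by (intro sum.cong) auto
  finally show ?thesis
    unfolding abs_split using sums by (simp add: sum.distrib sum_subtractf flip: sum_distrib_left)
qed

definition intermediate_prices :: "real \<Rightarrow> ('n \<Rightarrow> ('n \<Rightarrow> real) \<Rightarrow> real) \<Rightarrow> ('n \<Rightarrow> real) \<Rightarrow> ('n \<Rightarrow> real) \<Rightarrow> ('n \<Rightarrow> real)" where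
  "intermediate_prices lam x w p = (\<lambda>k. min (p k) (update lam x w p k))"

context
  fixes x :: "'n::finite \<Rightarrow> ('n \<Rightarrow> real) \<Rightarrow> real" and w :: "'n \<Rightarrow> real" and E lam :: real
  assumes w_pos: "\<forall>i. w i > 0" and x_pos: "\<forall>q. pos_prices q \<longrightarrow> (\<forall>i. x i q > 0)"
    and wgs: "weak_gross_substitutes x" and elast: "elasticity_at_most E x" and E: "1 \<le> E"
    and lam: "0 \<le> lam" "lam \<le> 1/2" "lam * E \<le> 1/2"
begin

lemma update_pos_prices:
  assumes "pos_prices p"
  shows "pos_prices (update lam x w p)" and "pos_prices (intermediate_prices lam x w p)"
proof -
  have "0 < price_factor lam (x i p) (w i)" for i
    using price_factor_pos w_pos x_pos assms lam by auto
  then show "pos_prices (update lam x w p)"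
    using assms unfolding pos_prices_def update_eq by simp
  then show "pos_prices (intermediate_prices lam x w p)"
    using assms unfolding pos_prices_def intermediate_prices_def by simp
qed

lemma deficit_spending:
  fixes p :: "'n \<Rightarrow> real" and i :: 'n
  defines "p' \<equiv> update lam x w p" and "r \<equiv> intermediate_prices lam x w p"
  assumes p: "pos_prices p" and deficit: "x i p < w i"
  shows "p i * x i p \<le> p' i * w i" and "r i * x i r \<le> p' i * w i" and "r i * x i r \<le> p' i * x i p'"
proof -
  define \<rho> where "\<rho> = price_factor lam (x i p) (w i)"
  have positive: "0 < w i" "0 < x i p" "0 < p i" using w_pos x_pos p by (auto simp: pos_prices_def)
  have \<rho>: "0 < \<rho>" "\<rho> \<le> 1" "x i p \<le> w i * \<rho> powr E"
    using price_factor_pos[of "w i" "x i p" lam] price_factor_deficit[of "w i" "x i p" lam E]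
      positive lam E deficit unfolding \<rho>_def by auto
  have p'i: "p' i = p i * \<rho>" unfolding p'_def \<rho>_def update_eq ..
  have r: "pos_prices r" "\<forall>k. r k \<le> p k" "\<forall>k. r k \<le> p' k" "r i = p' i"
    using update_pos_prices[OF p] positive \<rho> p'i unfolding r_def p'_def intermediate_prices_def
    by (auto simp: mult_left_le)
  note good = deficit_good[OF wgs elast r \<rho>(1) p'i \<rho>(3)]
  have "x i p \<le> \<rho> * w i"
    using price_factor_between[of "w i" "x i p" lam] positive lam deficit unfolding \<rho>_def by auto
  then show "p i * x i p \<le> p' i * w i" using p'i positive by (simp add: mult.assoc)
  show "r i * x i r \<le> p' i * w i" "r i * x i r \<le> p' i * x i p'"
    using good r(4) update_pos_prices[OF p] unfolding p'_def pos_prices_def by (auto intro: mult_left_mono)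
qed

lemma surplus_spending:
  fixes p :: "'n \<Rightarrow> real" and i :: 'n
  defines "p' \<equiv> update lam x w p" and "r \<equiv> intermediate_prices lam x w p"
  assumes p: "pos_prices p" and surplus: "\<not> x i p < w i"
  shows "p' i * w i \<le> p i * x i p" and "r i * x i r \<le> p i * x i p"
    and "p' i * w i - p' i * x i p' \<le> p i * x i p - r i * x i r"
proof -
  define \<rho> where "\<rho> = price_factor lam (x i p) (w i)"
  have positive: "0 < w i" "0 < x i p" "0 < p i" using w_pos x_pos p by (auto simp: pos_prices_def)
  have \<rho>: "1 \<le> \<rho>" "w i * \<rho> powr E \<le> x i p"
    using price_factor_surplus[of "w i" "x i p" lam E] positive lam E surplus unfolding \<rho>_def by auto
  have p'i: "p' i = p i * \<rho>" unfolding p'_def \<rho>_def update_eq ..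
  have r: "pos_prices r" "\<forall>k. r k \<le> p k" "\<forall>k. r k \<le> p' k" "r i = p i"
    using update_pos_prices[OF p] positive \<rho> p'i unfolding r_def p'_def intermediate_prices_def
    by auto
  note good = surplus_good[OF wgs elast E r \<rho>(1) p'i \<rho>(2)]
  have "\<rho> * w i \<le> x i p"
    using price_factor_between[of "w i" "x i p" lam] positive lam surplus unfolding \<rho>_def by auto
  then show "p' i * w i \<le> p i * x i p" using p'i positive by (simp add: mult.assoc)
  show "r i * x i r \<le> p i * x i p" using good(2) r(4) positive by simp
  have "p i * (\<rho> * (w i - x i p')) \<le> p i * (x i p - x i r)"
    using good(1) positive by (intro mult_left_mono) auto
  then show "p' i * w i - p' i * x i p' \<le> p i * x i p - r i * x i r"
    using p'i r(4) by (simp add: algebra_simps)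
qed

lemma potential_update_bound:
  assumes p: "pos_prices p"
    and spending: "\<forall>q. pos_prices q \<longrightarrow> (\<Sum>i\<in>UNIV. q i * x i q) = M"
  shows "phi x w (update lam x w p)
           \<le> (\<Sum>i\<in>UNIV. p i * \<bar>x i p - price_factor lam (x i p) (w i) * w i\<bar>)"
proof -
  define p' where "p' = update lam x w p"
  define r where "r = intermediate_prices lam x w p"
  have pos: "pos_prices p'" "pos_prices r"
    using update_pos_prices[OF p] unfolding p'_def r_def by auto
  have "(\<Sum>i\<in>UNIV. \<bar>p' i * x i p' - p' i * w i\<bar>) \<le> (\<Sum>i\<in>UNIV. \<bar>p i * x i p - p' i * w i\<bar>)"
  proof (rule sum_abs_gap_decrease[where P = "\<lambda>i. x i p < w i" and sr = "\<lambda>i. r i * x i r"])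
    show "(\<Sum>i\<in>UNIV. p' i * x i p') = (\<Sum>i\<in>UNIV. p i * x i p)"
      and "(\<Sum>i\<in>UNIV. r i * x i r) = (\<Sum>i\<in>UNIV. p i * x i p)"
      using spending p pos by auto
  qed (use deficit_spending[OF p] surplus_spending[OF p] in \<open>auto simp: p'_def r_def\<close>)
  moreover have "phi x w p' = (\<Sum>i\<in>UNIV. \<bar>p' i * x i p' - p' i * w i\<bar>)"
    using pos(1) unfolding phi_def pos_prices_def
    by (intro sum.cong refl) (metis abs_mult abs_of_pos right_diff_distrib)
  moreover have "\<bar>p i * x i p - p' i * w i\<bar> = p i * \<bar>x i p - price_factor lam (x i p) (w i) * w i\<bar>" for i
    using p unfolding p'_def update_eq pos_prices_def
    by (metis abs_mult abs_of_pos mult.assoc right_diff_distrib)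
  ultimately show ?thesis unfolding p'_def by simp
qed

end

lemma gap_share_bound:
  fixes c d s y :: real
  assumes d: "2 \<le> d" and s: "0 < s" and y: "0 < y" "y \<le> d * s" and c: "0 \<le> c"
  shows "c / (d - 1) * \<bar>y - s\<bar> \<le> c * \<bar>y - s\<bar> * min 1 (s / \<bar>y - s\<bar>)"
proof (cases "y = s")
  case False
  have "2 * s \<le> d * s" using mult_right_mono[OF d] s by simp
  moreover have "(d - 1) * s = d * s - s" by (simp add: algebra_simps)
  ultimately have "\<bar>y - s\<bar> \<le> (d - 1) * s"
    using y s unfolding abs_le_iff by linarith
  then have "1 / (d - 1) \<le> min 1 (s / \<bar>y - s\<bar>)"
    using False d by (simp add: field_simps)
  then have "c * \<bar>y - s\<bar> * (1 / (d - 1)) \<le> c * \<bar>y - s\<bar> * min 1 (s / \<bar>y - s\<bar>)"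
    using c by (intro mult_left_mono) simp_all
  then show ?thesis by simp
qed simp

theorem mainTheorem7:
  fixes x :: "'n::finite \<Rightarrow> ('n \<Rightarrow> real) \<Rightarrow> real"
    and w p :: "'n \<Rightarrow> real"
    and M E lam :: real
  assumes w_pos: "\<forall>i. w i > 0"
    and x_pos: "\<forall>q. pos_prices q \<longrightarrow> (\<forall>i. x i q > 0)"
    and M_pos: "M > 0"
    and spending: "\<forall>q. pos_prices q \<longrightarrow> (\<Sum>i\<in>UNIV. q i * x i q) = M"
    and WGS: "\<forall>q i j s t. pos_prices q \<and> j \<noteq> i \<and> 0 < s \<and> s \<le> t
                 \<longrightarrow> x j (q(i := s)) \<le> x j (q(i := t))"
    and elasticity: "\<forall>q i. pos_prices q \<longrightarrow> (\<exists>D.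
                 ((\<lambda>t. x i (q(i := t))) has_real_derivative D) (at (q i))
                 \<and> x i q / q i \<le> - D \<and> - D \<le> E * (x i q / q i))"
    and E_ge: "E \<ge> 1"
    and lam_pos: "0 < lam" and lam_le: "lam \<le> 1/2"
    and lam_E: "lam * (2 * E - 1) \<le> 1/2"
    and p_pos: "pos_prices p"
  shows "phi x w p - phi x w (update lam x w p)
           \<ge> (\<Sum>i\<in>UNIV. lam * p i * \<bar>x i p - w i\<bar> * min 1 (w i / \<bar>x i p - w i\<bar>))
         \<and> (\<forall>d::real. d \<ge> 2 \<and> (\<forall>i. x i p \<le> d * w i)
              \<longrightarrow> phi x w (update lam x w p) \<le> (1 - lam / (d - 1)) * phi x w p)"
proof -
  have wgs: "weak_gross_substitutes x" using WGS unfolding weak_gross_substitutes_def .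
  have elast: "elasticity_at_most E x" using elasticity unfolding elasticity_at_most_def by blast
  have lamE: "lam * E \<le> 1/2" using lam_E lam_le by (simp add: algebra_simps)
  have positive: "0 < w i" "0 < x i p" "0 < p i" for i
    using w_pos x_pos p_pos by (auto simp: pos_prices_def)
  define gain where "gain i = lam * p i * \<bar>x i p - w i\<bar> * min 1 (w i / \<bar>x i p - w i\<bar>)" for i
  have "p i * \<bar>x i p - w i\<bar> - p i * \<bar>x i p - price_factor lam (x i p) (w i) * w i\<bar> = gain i" for i
    using price_factor_gain[of "w i" "x i p" lam] positive lam_pos lam_le
    unfolding gain_def by (simp flip: right_diff_distrib)
  then have "phi x w p - (\<Sum>i\<in>UNIV. p i * \<bar>x i p - price_factor lam (x i p) (w i) * w i\<bar>) = sum gain UNIV"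
    unfolding phi_def by (simp flip: sum_subtractf)
  then have decrease: "phi x w p - phi x w (update lam x w p) \<ge> sum gain UNIV"
    using potential_update_bound[OF w_pos x_pos wgs elast E_ge _ lam_le lamE p_pos spending] lam_pos
    by simp
  have "phi x w (update lam x w p) \<le> (1 - lam / (d - 1)) * phi x w p"
    if d: "d \<ge> 2" "\<forall>i. x i p \<le> d * w i" for d :: real
  proof -
    have "lam * p i / (d - 1) * \<bar>x i p - w i\<bar> \<le> gain i" for i
      unfolding gain_def using d positive lam_pos by (intro gap_share_bound) (auto simp: less_imp_le)
    then have "lam / (d - 1) * (p i * \<bar>x i p - w i\<bar>) \<le> gain i" for i
      by (simp add: mult.assoc)
    then have "lam / (d - 1) * phi x w p \<le> sum gain UNIV"
      unfolding phi_def sum_distrib_left by (intro sum_mono)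
    then show ?thesis using decrease by (simp add: algebra_simps)
  qed
  then show ?thesis using decrease unfolding gain_def by blast
qed

end
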